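(* If the dataset is balanced, i.e. $s_{N+1}=s_1$, then for every $\theta\in\mathbb R^d$, $$w(\theta)\le 2f_d(\theta).$$
   Context: Finite-sample setting. Let $\mathcal S$ be a finite state space, $\phi:\mathcal S\to\mathbb R^d$ a feature map with $\|\phi(s)\|_2\le 1$ for all $s$, $r:\mathcal S\times\mathcal S\to\mathbb R$ a reward function and $\gamma\in[0,1)$. For a pair of states $(s,s')$ and $\theta\in\mathbb R^d$ let $g_{s,s'}(\theta)=(r(s,s')+\gamma\phi(s')^T\theta-\phi(s)^T\theta)\phi(s)$. A dataset is a state trajectory $s_1,\dots,s_{N+1}$, giving the $N$ pairs $(s_t,s_{t+1})$, $t=1,\dots,N$. Let $A_d=\frac1N\sum_{t=1}^N\phi(s_t)(\phi(s_t)-\gamma\phi(s_{t+1}))^T$ and $b_d=\frac1N\sum_{t=1}^N r(s_t,s_{t+1})\phi(s_t)$. Assume $A_d$ is nonsingular and let $\theta^*=A_d^{-1}b_d$. Define $f_d(\theta)=(\theta-\theta^* )^TA_d(\theta-\theta^* )$ and $w(\theta)=\frac1N\sum_{t=1}^N\|g_{s_t,s_{t+1}}(\theta)-g_{s_t,s_{t+1}}(\theta^* )\|^2$. *)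

theory Defs
  imports "HOL-Analysis.Analysis"
begin

definition td_g :: "('s \<Rightarrow> real^'d) \<Rightarrow> ('s \<Rightarrow> 's \<Rightarrow> real) \<Rightarrow> real \<Rightarrow> 's \<Rightarrow> 's \<Rightarrow> real^'d \<Rightarrow> real^'d" where
  "td_g \<phi> r \<gamma> x x' \<theta> = (r x x' + \<gamma> * (\<phi> x' \<bullet> \<theta>) - \<phi> x \<bullet> \<theta>) *\<^sub>R \<phi> x"

definition td_A :: "('s \<Rightarrow> real^'d) \<Rightarrow> real \<Rightarrow> (nat \<Rightarrow> 's) \<Rightarrow> nat \<Rightarrow> real^'d^'d" where
  "td_A \<phi> \<gamma> s N = (\<chi> i j. (1 / real N) *
     (\<Sum>t=1..N. (\<phi> (s t) $ i) * ((\<phi> (s t) - \<gamma> *\<^sub>R \<phi> (s (t+1))) $ j)))"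

definition td_b :: "('s \<Rightarrow> real^'d) \<Rightarrow> ('s \<Rightarrow> 's \<Rightarrow> real) \<Rightarrow> (nat \<Rightarrow> 's) \<Rightarrow> nat \<Rightarrow> real^'d" where
  "td_b \<phi> r s N = (1 / real N) *\<^sub>R (\<Sum>t=1..N. r (s t) (s (t+1)) *\<^sub>R \<phi> (s t))"

definition td_theta_star :: "('s \<Rightarrow> real^'d) \<Rightarrow> ('s \<Rightarrow> 's \<Rightarrow> real) \<Rightarrow> real \<Rightarrow> (nat \<Rightarrow> 's) \<Rightarrow> nat \<Rightarrow> real^'d" where
  "td_theta_star \<phi> r \<gamma> s N = matrix_inv (td_A \<phi> \<gamma> s N) *v td_b \<phi> r s N"

definition td_f :: "('s \<Rightarrow> real^'d) \<Rightarrow> ('s \<Rightarrow> 's \<Rightarrow> real) \<Rightarrow> real \<Rightarrow> (nat \<Rightarrow> 's) \<Rightarrow> nat \<Rightarrow> real^'d \<Rightarrow> real" where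
  "td_f \<phi> r \<gamma> s N \<theta> = (let \<delta> = \<theta> - td_theta_star \<phi> r \<gamma> s N in \<delta> \<bullet> (td_A \<phi> \<gamma> s N *v \<delta>))"

definition td_w :: "('s \<Rightarrow> real^'d) \<Rightarrow> ('s \<Rightarrow> 's \<Rightarrow> real) \<Rightarrow> real \<Rightarrow> (nat \<Rightarrow> 's) \<Rightarrow> nat \<Rightarrow> real^'d \<Rightarrow> real" where
  "td_w \<phi> r \<gamma> s N \<theta> = (1 / real N) * (\<Sum>t=1..N.
     (norm (td_g \<phi> r \<gamma> (s t) (s (t+1)) \<theta> - td_g \<phi> r \<gamma> (s t) (s (t+1)) (td_theta_star \<phi> r \<gamma> s N)))\<^sup>2)"

end

theory Submission
  imports Defs
begin

text \<open>Write \<open>a t = \<phi>(s t) \<bullet> (\<theta> - \<theta>\<^sup>*)\<close>. Then \<open>g(\<theta>) - g(\<theta>\<^sup>*)\<close> at step \<open>t\<close> is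
  \<open>(\<gamma> a(t+1) - a t) \<phi>(s t)\<close>, so \<open>w(\<theta>)\<close> is at most the mean of \<open>(a t - \<gamma> a(t+1))\<^sup>2\<close>,
  while \<open>f\<^sub>d(\<theta>)\<close> is the mean of \<open>a t (a t - \<gamma> a(t+1))\<close>. Their difference
  \<open>2 f\<^sub>d - mean (a t - \<gamma> a(t+1))\<^sup>2\<close> equals the mean of \<open>a t\<^sup>2 - \<gamma>\<^sup>2 a(t+1)\<^sup>2\<close>, which is
  nonnegative because balancedness makes \<open>\<Sum> a(t+1)\<^sup>2 = \<Sum> a t\<^sup>2\<close>.\<close>

lemma sum_shift_cyclic:
  fixes g :: "nat \<Rightarrow> 'a::comm_monoid_add"
  assumes "g (N + 1) = g 1"
  shows "(\<Sum>t=1..N. g (t + 1)) = (\<Sum>t=1..N. g t)"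
proof (cases N)
  case (Suc M)
  have "(\<Sum>t=1..N. g (t + 1)) = (\<Sum>t=Suc 1..Suc N. g t)"
    by (subst sum.shift_bounds_cl_Suc_ivl) (simp add: o_def)
  also have "\<dots> = (\<Sum>t=Suc 1..N. g t) + g (Suc N)"
    using Suc by (subst sum.cl_ivl_Suc) simp
  also have "\<dots> = (\<Sum>t=1..N. g t)"
    using Suc assms by (subst sum.atLeast_Suc_atMost[of 1 N]) (simp_all add: add.commute)
  finally show ?thesis .
qed simp

lemma sum_square_shift_le_twice_sum:
  fixes a :: "nat \<Rightarrow> real"
  assumes "\<bar>\<gamma>\<bar> \<le> 1" and "a (N + 1) = a 1"
  shows "(\<Sum>t=1..N. (a t - \<gamma> * a (t+1))\<^sup>2) \<le> 2 * (\<Sum>t=1..N. a t * (a t - \<gamma> * a (t+1)))"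
proof -
  let ?S = "\<Sum>t=1..N. (a t)\<^sup>2"
  have "(\<Sum>t=1..N. (a t - \<gamma> * a (t+1))\<^sup>2)
      = 2 * (\<Sum>t=1..N. a t * (a t - \<gamma> * a (t+1))) - ?S + \<gamma>\<^sup>2 * (\<Sum>t=1..N. (a (t+1))\<^sup>2)"
    by (simp add: sum_distrib_left sum_subtractf[symmetric] sum.distrib[symmetric]
        power2_eq_square algebra_simps)
  also have "(\<Sum>t=1..N. (a (t+1))\<^sup>2) = ?S"
    using sum_shift_cyclic[of "\<lambda>t. (a t)\<^sup>2"] assms(2) by simp
  also have "\<gamma>\<^sup>2 * ?S \<le> ?S"
    using assms(1) by (intro mult_left_le_one_le sum_nonneg) (auto simp: abs_square_le_1)
  finally show ?thesis by simp
qed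

lemma td_g_diff:
  "td_g \<phi> r \<gamma> x x' \<theta> - td_g \<phi> r \<gamma> x x' \<theta>'
     = (\<gamma> * (\<phi> x' \<bullet> (\<theta> - \<theta>')) - \<phi> x \<bullet> (\<theta> - \<theta>')) *\<^sub>R \<phi> x"
  unfolding td_g_def by (simp add: algebra_simps inner_diff_right)

lemma norm_td_g_diff_le:
  assumes "norm (\<phi> x) \<le> 1"
  shows "(norm (td_g \<phi> r \<gamma> x x' \<theta> - td_g \<phi> r \<gamma> x x' \<theta>'))\<^sup>2
           \<le> (\<phi> x \<bullet> (\<theta> - \<theta>') - \<gamma> * (\<phi> x' \<bullet> (\<theta> - \<theta>')))\<^sup>2"
proof -
  let ?c = "\<phi> x \<bullet> (\<theta> - \<theta>') - \<gamma> * (\<phi> x' \<bullet> (\<theta> - \<theta>'))"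
  have "(norm (td_g \<phi> r \<gamma> x x' \<theta> - td_g \<phi> r \<gamma> x x' \<theta>'))\<^sup>2 = ?c\<^sup>2 * (norm (\<phi> x))\<^sup>2"
    unfolding td_g_diff by (simp add: power_mult_distrib power2_commute)
  also have "\<dots> \<le> ?c\<^sup>2"
    using assms by (intro mult_left_le) (auto simp: power_le_one)
  finally show ?thesis .
qed

lemma td_A_mult_vec:
  "td_A \<phi> \<gamma> s N *v v
     = (1 / real N) *\<^sub>R (\<Sum>t=1..N. ((\<phi> (s t) - \<gamma> *\<^sub>R \<phi> (s (t+1))) \<bullet> v) *\<^sub>R \<phi> (s t))"
  unfolding td_A_def
  by (simp add: vec_eq_iff matrix_vector_mult_def inner_vec_def sum_distrib_left
      sum_distrib_right mult.assoc mult.left_commute sum_component)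
    (subst sum.swap, simp add: mult_ac)

lemma td_f_eq_mean:
  fixes \<phi> :: "'s \<Rightarrow> real^'d" and r \<gamma> s N \<theta>
  defines "a \<equiv> \<lambda>t. \<phi> (s t) \<bullet> (\<theta> - td_theta_star \<phi> r \<gamma> s N)"
  shows "td_f \<phi> r \<gamma> s N \<theta> = (1 / real N) * (\<Sum>t=1..N. a t * (a t - \<gamma> * a (t+1)))"
  unfolding td_f_def Let_def td_A_mult_vec a_def
  by (simp add: inner_sum_right inner_diff_left inner_diff_right inner_commute mult.commute right_diff_distrib)

lemma td_w_le_mean:
  fixes \<phi> :: "'s \<Rightarrow> real^'d" and r \<gamma> s N \<theta>
  assumes "\<And>x. norm (\<phi> x) \<le> 1"
  defines "a \<equiv> \<lambda>t. \<phi> (s t) \<bullet> (\<theta> - td_theta_star \<phi> r \<gamma> s N)"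
  shows "td_w \<phi> r \<gamma> s N \<theta> \<le> (1 / real N) * (\<Sum>t=1..N. (a t - \<gamma> * a (t+1))\<^sup>2)"
  unfolding td_w_def a_def
  by (intro mult_left_mono sum_mono norm_td_g_diff_le assms) auto

theorem mainTheorem5:
  fixes \<phi> :: "'s::finite \<Rightarrow> real^'d"
    and r :: "'s \<Rightarrow> 's \<Rightarrow> real"
    and \<gamma> :: real
    and s :: "nat \<Rightarrow> 's"
    and N :: nat
    and \<theta> :: "real^'d"
  assumes phi_bound: "\<And>x. norm (\<phi> x) \<le> 1"
    and gamma: "0 \<le> \<gamma>" "\<gamma> < 1"
    and N_pos: "N \<ge> 1"
    and nonsing: "invertible (td_A \<phi> \<gamma> s N)"
    and balanced: "s (N + 1) = s 1"
  shows "td_w \<phi> r \<gamma> s N \<theta> \<le> 2 * td_f \<phi> r \<gamma> s N \<theta>"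
proof -
  define a where "a t = \<phi> (s t) \<bullet> (\<theta> - td_theta_star \<phi> r \<gamma> s N)" for t
  have "td_w \<phi> r \<gamma> s N \<theta> \<le> (1 / real N) * (\<Sum>t=1..N. (a t - \<gamma> * a (t+1))\<^sup>2)"
    using td_w_le_mean[OF phi_bound] by (simp add: a_def)
  also have "\<dots> \<le> (1 / real N) * (2 * (\<Sum>t=1..N. a t * (a t - \<gamma> * a (t+1))))"
    using gamma balanced
    by (intro mult_left_mono sum_square_shift_le_twice_sum) (auto simp: a_def)
  also have "\<dots> = 2 * td_f \<phi> r \<gamma> s N \<theta>"
    by (simp add: td_f_eq_mean a_def)
  finally show ?thesis .
qed

end
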